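(* Let $(R,\mathfrak{m})$ be a finite commutative local ring with identity such that $\mathfrak{m}$ is not a principal ideal, and let $I$ be a proper ideal of $R$ (so $I\subseteq\mathfrak m$). If $\Gamma''_I(R)$ is planar, then $\operatorname{ara}(\mathfrak{m}/I)\leq 4$.
   Context: For an ideal $K$ of a finite commutative ring, $\operatorname{ara}(K)$ denotes the smallest of the cardinalities of minimal generating sets of $K$; here $\mathfrak m/I$ is regarded as an ideal of $R/I$. For an ideal $I$ of $R$, $\Gamma''_I(R)$ is the simple undirected graph whose vertex set is $\{x\in R\setminus I : xR+I\neq R\}$, with distinct vertices $x,y$ adjacent if and only if $x\notin yR+I$ and $y\notin xR+I$. A graph is planar if it can be drawn in the plane with edges meeting only at their endpoints. *)

theory Defs
  imports "HOL-Algebra.Algebra" "HOL-Analysis.Analysis"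
begin

definition local_ring_with_max :: "('a, 'b) ring_scheme \<Rightarrow> 'a set \<Rightarrow> bool" where
  "local_ring_with_max R m \<longleftrightarrow> cring R \<and> maximalideal m R \<and>
     (\<forall>J. maximalideal J R \<longrightarrow> J = m)"

definition gamma2_vertices :: "('a, 'b) ring_scheme \<Rightarrow> 'a set \<Rightarrow> 'a set" where
  "gamma2_vertices R I =
     {x \<in> carrier R. x \<notin> I \<and> (PIdl\<^bsub>R\<^esub> x) <+>\<^bsub>R\<^esub> I \<noteq> carrier R}"

definition gamma2_adj :: "('a, 'b) ring_scheme \<Rightarrow> 'a set \<Rightarrow> 'a \<Rightarrow> 'a \<Rightarrow> bool" where
  "gamma2_adj R I x y \<longleftrightarrow>
     x \<in> gamma2_vertices R I \<and> y \<in> gamma2_vertices R I \<and> x \<noteq> y \<and>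
     x \<notin> (PIdl\<^bsub>R\<^esub> y) <+>\<^bsub>R\<^esub> I \<and> y \<notin> (PIdl\<^bsub>R\<^esub> x) <+>\<^bsub>R\<^esub> I"

definition planar_graph :: "'v set \<Rightarrow> ('v \<Rightarrow> 'v \<Rightarrow> bool) \<Rightarrow> bool" where
  "planar_graph V E \<longleftrightarrow>
    (\<exists>(pos :: 'v \<Rightarrow> complex) (c :: 'v \<Rightarrow> 'v \<Rightarrow> real \<Rightarrow> complex).
       inj_on pos V \<and>
       (\<forall>x\<in>V. \<forall>y\<in>V. E x y \<longrightarrow>
           arc (c x y) \<and> pathstart (c x y) = pos x \<and> pathfinish (c x y) = pos y \<and>
           path_image (c x y) \<inter> pos ` V = {pos x, pos y}) \<and>
       (\<forall>x\<in>V. \<forall>y\<in>V. \<forall>u\<in>V. \<forall>v\<in>V. E x y \<longrightarrow> E u v \<longrightarrow> {x, y} \<noteq> {u, v} \<longrightarrow>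
           path_image (c x y) \<inter> path_image (c u v) \<subseteq> pos ` ({x, y} \<inter> {u, v})))"

definition quot_ideal :: "('a, 'b) ring_scheme \<Rightarrow> 'a set \<Rightarrow> 'a set \<Rightarrow> 'a set set" where
  "quot_ideal R m I = (\<lambda>x. I +>\<^bsub>R\<^esub> x) ` m"

definition minimal_gen_set :: "('c, 'd) ring_scheme \<Rightarrow> 'c set \<Rightarrow> 'c set \<Rightarrow> bool" where
  "minimal_gen_set A K S \<longleftrightarrow> S \<subseteq> carrier A \<and> Idl\<^bsub>A\<^esub> S = K \<and>
     (\<forall>T. T \<subset> S \<longrightarrow> Idl\<^bsub>A\<^esub> T \<noteq> K)"

definition ara :: "('c, 'd) ring_scheme \<Rightarrow> 'c set \<Rightarrow> nat" where
  "ara A K = Min {card S | S. minimal_gen_set A K S}"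

end

theory Submission
  imports Defs
begin

(* A minimal generating set of m/I lifts to elements of m - I none of which lies in the ideal
   generated by another one together with I.  So the lifts are pairwise adjacent vertices of
   Gamma''_I(R), and a planar graph has no five pairwise adjacent vertices.

   That K5 is not planar is derived from the Jordan curve theorem.  In a drawing of K4, the
   three paths between the end points of an edge form a theta graph, one of whose arcs runs
   inside the cycle formed by the other two; it follows that some vertex lies inside the
   triangle of the other three.  The edges from that vertex split the triangle into three
   smaller ones, and a fifth vertex would lie inside one of them together with the opposite
   vertex of the big triangle. *)

section \<open>Theta graphs in the plane\<close>

definition independent_arcs ::
    "complex \<Rightarrow> complex \<Rightarrow> (real \<Rightarrow> complex) \<Rightarrow> (real \<Rightarrow> complex) \<Rightarrow> bool" where
  "independent_arcs a b c d \<longleftrightarrow> arc c \<and> arc d \<and>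
     pathstart c = a \<and> pathfinish c = b \<and> pathstart d = a \<and> pathfinish d = b \<and>
     path_image c \<inter> path_image d = {a, b}"

lemma connected_disjoint_inside:
  assumes "connected C" "C \<inter> S = {}" "C \<inter> inside S \<noteq> {}"
  shows "C \<subseteq> inside S"
  using inside_outside_intersect_connected[of C S] assms inside_Un_outside[of S] by blast

lemma connected_disjoint_outside:
  assumes "connected C" "C \<inter> S = {}" "C \<inter> outside S \<noteq> {}"
  shows "C \<subseteq> outside S"
  using inside_outside_intersect_connected[of C S] assms inside_Un_outside[of S] by blast

lemma connected_arc_minus_pathstart:
  assumes "arc g"
  shows "connected (path_image g - {pathstart g})"
proof -
  have "path_image g - {pathstart g} = g ` {0<..1}"
  proof
    show "path_image g - {pathstart g} \<subseteq> g ` {0<..1}"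
      unfolding path_image_def pathstart_def by (force simp: less_le)
    show "g ` {0<..1} \<subseteq> path_image g - {pathstart g}"
      using assms unfolding arc_def path_image_def pathstart_def by (force simp: inj_on_def)
  qed
  moreover have "continuous_on {0<..1} g"
    using assms unfolding arc_def path_def by (rule continuous_on_subset[OF conjunct1]) auto
  ultimately show ?thesis
    using connected_Ioc connected_continuous_image by metis
qed

text \<open>Janiszewski's theorem, phrased with unbounded components.\<close>

lemma outside_Un_if_connected_Int:
  fixes S T :: "complex set"
  assumes "compact S" "compact T" "connected (S \<inter> T)" "x \<in> outside S" "x \<in> outside T"
  shows "x \<in> outside (S \<union> T)"
proof -
  have "bounded (- outside S \<union> - outside T \<union> - outside (S \<union> T))"
    using assms(1,2) by (simp add: cobounded_outside compact_imp_bounded)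
  then have "- outside S \<union> - outside T \<union> - outside (S \<union> T) \<noteq> UNIV"
    using not_bounded_UNIV by metis
  then obtain y where y: "y \<in> outside S" "y \<in> outside T" "y \<in> outside (S \<union> T)"
    by blast
  have cc: "connected_component (- U) x y" if "compact U" "x \<in> outside U" "y \<in> outside U" for U
    unfolding connected_component_def
    using that connected_outside[of U] compact_imp_bounded[of U]
    by (intro exI[of _ "outside U"]) (auto simp: outside_def)
  have "connected_component (- (S \<union> T)) x y"
    using Janiszewski[OF assms(1) compact_imp_closed[OF assms(2)] assms(3)]
      cc[OF assms(1,4) y(1)] cc[OF assms(2,5) y(2)] by blast
  then show ?thesis
    using outside_same_component y(3) connected_component_sym by blast
qed

lemma inside_independent_arcs:
  assumes "independent_arcs a b c d"
  shows "inside (path_image c \<union> path_image d) \<noteq> {}"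
    and "connected (inside (path_image c \<union> path_image d))"
    and "frontier (inside (path_image c \<union> path_image d)) = path_image c \<union> path_image d"
proof -
  have sp: "simple_path (c +++ reversepath d)"
    using assms by (auto simp: independent_arcs_def simple_path_join_loop_eq arc_reversepath)
  have loop: "pathfinish (c +++ reversepath d) = pathstart (c +++ reversepath d)"
    using assms by (simp add: independent_arcs_def)
  have img: "path_image (c +++ reversepath d) = path_image c \<union> path_image d"
    using assms by (simp add: independent_arcs_def path_image_join)
  show "inside (path_image c \<union> path_image d) \<noteq> {}"
    and "connected (inside (path_image c \<union> path_image d))"
    and "frontier (inside (path_image c \<union> path_image d)) = path_image c \<union> path_image d"
    using Jordan_inside_outside[OF sp loop] unfolding img by auto
qed

text \<open>Near an interior point of \<open>c1\<close>, the region bounded by \<open>c1, c2\<close> meets the unbounded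
  component of the complement of the cycle \<open>c2, c3\<close>; the region is connected and misses
  that cycle.\<close>

lemma theta_inside_subset_outside:
  assumes "independent_arcs a b c1 c2" "independent_arcs a b c1 c3" "independent_arcs a b c2 c3"
    and "(path_image c3 - {a, b}) \<inter> inside (path_image c1 \<union> path_image c2) = {}"
    and "(path_image c1 - {a, b}) \<inter> inside (path_image c2 \<union> path_image c3) = {}"
  shows "inside (path_image c1 \<union> path_image c2) \<subseteq> outside (path_image c2 \<union> path_image c3)"
proof -
  let ?T1 = "path_image c1" and ?T2 = "path_image c2" and ?T3 = "path_image c3"
  note J = inside_independent_arcs[OF assms(1)]
  have arcs: "arc c1" "arc c2" "arc c3" and ends: "pathstart c1 = a" "pathfinish c1 = b"
    and meet: "?T1 \<inter> ?T2 = {a, b}" "?T1 \<inter> ?T3 = {a, b}"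
    using assms(1-3) by (auto simp: independent_arcs_def)
  obtain q where q: "q \<in> ?T1 - {a, b}"
    using nonempty_simple_path_endless[OF arc_imp_simple_path[OF arcs(1)]] ends by auto
  then have "q \<in> outside (?T2 \<union> ?T3)"
    using assms(5) meet inside_Un_outside[of "?T2 \<union> ?T3"] by blast
  moreover have "open (outside (?T2 \<union> ?T3))"
    using arcs by (intro open_outside closed_Un compact_imp_closed compact_path_image arc_imp_path)
  ultimately obtain r where "r > 0" "ball q r \<subseteq> outside (?T2 \<union> ?T3)"
    using open_contains_ball by blast
  moreover have "q \<in> closure (inside (?T1 \<union> ?T2))"
    using J(3) q unfolding frontier_def by blast
  ultimately obtain y where "y \<in> inside (?T1 \<union> ?T2)" "dist y q < r"
    unfolding closure_approachable by blast
  with \<open>ball q r \<subseteq> _\<close> have "y \<in> inside (?T1 \<union> ?T2)" "y \<in> outside (?T2 \<union> ?T3)"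
    by (auto simp: dist_commute)
  moreover have "inside (?T1 \<union> ?T2) \<inter> (?T2 \<union> ?T3) = {}"
  proof -
    have "?T3 \<subseteq> (?T3 - {a, b}) \<union> ?T1" using meet by blast
    then show ?thesis using assms(4) inside_no_overlap[of "?T1 \<union> ?T2"] by blast
  qed
  ultimately show ?thesis
    using connected_disjoint_outside[OF J(2)] by blast
qed

text \<open>Otherwise the inside of the cycle \<open>c1, c2\<close> would lie outside the other two cycles,
  hence, by Janiszewski's theorem, outside the whole theta graph.\<close>

lemma theta_arc_meets_inside:
  assumes "independent_arcs a b c1 c2" "independent_arcs a b c1 c3" "independent_arcs a b c2 c3"
  shows "(path_image c3 - {a, b}) \<inter> inside (path_image c1 \<union> path_image c2) \<noteq> {} \<or>
         (path_image c1 - {a, b}) \<inter> inside (path_image c2 \<union> path_image c3) \<noteq> {} \<or>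
         (path_image c2 - {a, b}) \<inter> inside (path_image c1 \<union> path_image c3) \<noteq> {}"
proof (rule ccontr)
  let ?T1 = "path_image c1" and ?T2 = "path_image c2" and ?T3 = "path_image c3"
  assume "\<not> ?thesis"
  then have none: "(?T3 - {a, b}) \<inter> inside (?T1 \<union> ?T2) = {}"
      "(?T1 - {a, b}) \<inter> inside (?T2 \<union> ?T3) = {}" "(?T2 - {a, b}) \<inter> inside (?T1 \<union> ?T3) = {}"
    by blast+
  have swap: "independent_arcs a b c2 c1"
    using assms(1) by (auto simp: independent_arcs_def)
  obtain x where x: "x \<in> inside (?T1 \<union> ?T2)"
    using inside_independent_arcs(1)[OF assms(1)] by blast
  have "x \<in> outside (?T2 \<union> ?T3)"
    using theta_inside_subset_outside[OF assms none(1,2)] x by blast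
  moreover have "x \<in> outside (?T1 \<union> ?T3)"
    using theta_inside_subset_outside[OF swap assms(3,2)] none(1,3) x
    unfolding Un_commute[of ?T2 ?T1] by blast
  moreover have "compact (?T1 \<union> ?T3)" "compact (?T2 \<union> ?T3)"
    using assms
    by (auto simp: independent_arcs_def intro!: compact_Un compact_path_image arc_imp_path)
  moreover have "connected ((?T1 \<union> ?T3) \<inter> (?T2 \<union> ?T3))"
  proof -
    have "?T1 \<inter> ?T2 \<subseteq> ?T3"
      using assms(1,3) pathstart_in_path_image[of c3] pathfinish_in_path_image[of c3]
      by (simp add: independent_arcs_def)
    then have "(?T1 \<union> ?T3) \<inter> (?T2 \<union> ?T3) = ?T3"
      by blast
    then show ?thesis
      using assms(3) by (simp add: independent_arcs_def connected_path_image arc_imp_path)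
  qed
  ultimately have "x \<in> outside ((?T1 \<union> ?T3) \<union> (?T2 \<union> ?T3))"
    using outside_Un_if_connected_Int by blast
  then have "x \<in> outside (?T1 \<union> ?T2)"
    using outside_mono[of "?T1 \<union> ?T2" "(?T1 \<union> ?T3) \<union> (?T2 \<union> ?T3)"] by blast
  then show False
    using x inside_Int_outside by blast
qed

lemma independent_arcs_commute: "independent_arcs a b c d \<longleftrightarrow> independent_arcs a b d c"
  unfolding independent_arcs_def by blast

lemma inside_theta_split:
  assumes "independent_arcs a b c1 c2" "independent_arcs a b c1 c" "independent_arcs a b c2 c"
    and "path_image c \<inter> inside (path_image c1 \<union> path_image c2) \<noteq> {}"
  shows "inside (path_image c1 \<union> path_image c2) =
    inside (path_image c1 \<union> path_image c) \<union> inside (path_image c2 \<union> path_image c) \<union>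
    (path_image c - {a, b})"
proof -
  have "a \<noteq> b"
    using assms(1) arc_distinct_ends unfolding independent_arcs_def by metis
  then show ?thesis
    using split_inside_simple_closed_curve[of c1 a b c2 c] assms
    by (auto simp: independent_arcs_def arc_imp_simple_path)
qed

section \<open>Drawings of complete graphs\<close>

locale complete_drawing =
  fixes V :: "'v set" and pos :: "'v \<Rightarrow> complex" and edge :: "'v \<Rightarrow> 'v \<Rightarrow> real \<Rightarrow> complex"
  assumes inj_pos: "inj_on pos V"
    and arc_edge: "\<lbrakk>i \<in> V; j \<in> V; i \<noteq> j\<rbrakk> \<Longrightarrow> arc (edge i j)"
    and pathstart_edge: "\<lbrakk>i \<in> V; j \<in> V; i \<noteq> j\<rbrakk> \<Longrightarrow> pathstart (edge i j) = pos i"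
    and pathfinish_edge: "\<lbrakk>i \<in> V; j \<in> V; i \<noteq> j\<rbrakk> \<Longrightarrow> pathfinish (edge i j) = pos j"
    and path_image_edge_commute:
      "\<lbrakk>i \<in> V; j \<in> V; i \<noteq> j\<rbrakk> \<Longrightarrow> path_image (edge j i) = path_image (edge i j)"
    and path_image_edge_Int_subset:
      "\<lbrakk>i \<in> V; j \<in> V; k \<in> V; l \<in> V; i \<noteq> j; k \<noteq> l; {i, j} \<noteq> {k, l}\<rbrakk> \<Longrightarrow>
        path_image (edge i j) \<inter> path_image (edge k l) \<subseteq> pos ` ({i, j} \<inter> {k, l})"
begin

abbreviation E :: "'v \<Rightarrow> 'v \<Rightarrow> complex set" where
  "E i j \<equiv> path_image (edge i j)"

definition via :: "'v \<Rightarrow> 'v \<Rightarrow> 'v \<Rightarrow> real \<Rightarrow> complex" where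
  "via a c b = edge a c +++ edge c b"

definition triangle :: "'v set \<Rightarrow> complex set" where
  "triangle T = (\<Union>i\<in>T. \<Union>j\<in>T - {i}. E i j)"

definition quadrangle :: "'v \<Rightarrow> 'v \<Rightarrow> 'v \<Rightarrow> 'v \<Rightarrow> complex set" where
  "quadrangle a b c d = E a b \<union> E b c \<union> E c d \<union> E d a"

lemma pos_eq_iff: "i \<in> V \<Longrightarrow> j \<in> V \<Longrightarrow> pos i = pos j \<longleftrightarrow> i = j"
  using inj_pos by (auto simp: inj_on_eq_iff)

lemma pos_in_edge:
  assumes "i \<in> V" "j \<in> V" "i \<noteq> j"
  shows "pos i \<in> E i j" "pos j \<in> E i j"
  using pathstart_in_path_image pathfinish_in_path_image
    pathstart_edge[OF assms] pathfinish_edge[OF assms] by metis+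

lemma path_image_edge_Int:
  assumes "i \<in> V" "j \<in> V" "k \<in> V" "l \<in> V" "i \<noteq> j" "k \<noteq> l" "{i, j} \<noteq> {k, l}"
  shows "E i j \<inter> E k l = pos ` ({i, j} \<inter> {k, l})"
  using path_image_edge_Int_subset[OF assms] pos_in_edge assms by auto

lemma pos_notin_edge:
  assumes "i \<in> V" "j \<in> V" "k \<in> V" "i \<noteq> j" "k \<noteq> i" "k \<noteq> j"
  shows "pos k \<notin> E i j"
proof
  assume "pos k \<in> E i j"
  then have "pos k \<in> E i j \<inter> E k i"
    using pos_in_edge[of k i] assms by blast
  also have "\<dots> = {pos i}"
    using path_image_edge_Int[of i j k i] assms by (auto simp: doubleton_eq_iff)
  finally show False
    using pos_eq_iff assms by auto
qed

lemma connected_edge_minus_start: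
  "i \<in> V \<Longrightarrow> j \<in> V \<Longrightarrow> i \<noteq> j \<Longrightarrow> connected (E i j - {pos i})"
  using connected_arc_minus_pathstart arc_edge pathstart_edge by metis

lemma arc_via:
  assumes "{a, b, c} \<subseteq> V" "distinct [a, b, c]"
  shows "arc (via a c b)" "pathstart (via a c b) = pos a" "pathfinish (via a c b) = pos b"
    and "path_image (via a c b) = E a c \<union> E c b"
proof -
  have "E a c \<inter> E c b \<subseteq> {pathstart (edge c b)}"
    using path_image_edge_Int[of a c c b] pathstart_edge[of c b] assms
    by (auto simp: doubleton_eq_iff)
  then show "arc (via a c b)"
    unfolding via_def using assms
    by (intro arc_join arc_edge) (auto simp: pathstart_edge pathfinish_edge)
  show "pathstart (via a c b) = pos a" "pathfinish (via a c b) = pos b"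
    "path_image (via a c b) = E a c \<union> E c b"
    using assms by (auto simp: via_def pathstart_edge pathfinish_edge path_image_join)
qed

lemma triangle_eq:
  assumes "{a, b, c} \<subseteq> V" "distinct [a, b, c]"
  shows "triangle {a, b, c} = E a b \<union> E b c \<union> E a c"
proof -
  have "E b a = E a b" "E c b = E b c" "E c a = E a c"
    using path_image_edge_commute assms by auto
  then show ?thesis
    unfolding triangle_def using assms by auto
qed

lemma triangle_via:
  assumes "{a, b, c} \<subseteq> V" "distinct [a, b, c]"
  shows "triangle {a, b, c} = E a b \<union> path_image (via a c b)"
  using assms path_image_edge_commute[of b c] by (auto simp: triangle_eq arc_via)

lemma independent_edge_via:
  assumes "{a, b, c} \<subseteq> V" "distinct [a, b, c]"
  shows "independent_arcs (pos a) (pos b) (edge a b) (via a c b)"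
  using assms arc_via[of a b c] path_image_edge_Int[of a b a c] path_image_edge_Int[of a b c b]
  by (auto simp: independent_arcs_def arc_edge pathstart_edge pathfinish_edge doubleton_eq_iff)

lemma independent_via_via:
  assumes "{a, b, c, d} \<subseteq> V" "distinct [a, b, c, d]"
  shows "independent_arcs (pos a) (pos b) (via a c b) (via a d b)"
  using assms arc_via[of a b c] arc_via[of a b d]
    path_image_edge_Int[of a c a d] path_image_edge_Int[of a c d b]
    path_image_edge_Int[of c b a d] path_image_edge_Int[of c b d b]
  by (auto simp: independent_arcs_def doubleton_eq_iff)

lemma edge_Int_triangle:
  assumes "{a, b, c, d} \<subseteq> V" "distinct [a, b, c, d]"
  shows "E d a \<inter> triangle {a, b, c} = {pos a}"
  using assms path_image_edge_Int[of d a a b] path_image_edge_Int[of d a b c]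
    path_image_edge_Int[of d a a c]
  by (auto simp: triangle_eq doubleton_eq_iff)

lemma inside_triangle_other_vertex:
  assumes "{a, b, c, u, w} \<subseteq> V" "distinct [a, b, c, u, w]"
    and "pos u \<in> inside (triangle {a, b, c})"
  shows "pos w \<in> inside (triangle {a, b, c})"
proof -
  have "E u w \<inter> triangle {a, b, c} = {}"
    using assms path_image_edge_Int[of u w a b] path_image_edge_Int[of u w b c]
      path_image_edge_Int[of u w a c]
    by (auto simp: triangle_eq doubleton_eq_iff)
  moreover have "connected (E u w)"
    using assms by (simp add: arc_edge arc_imp_path connected_path_image)
  ultimately show ?thesis
    using connected_disjoint_inside[of "E u w" "triangle {a, b, c}"] pos_in_edge[of u w] assms
    by blast
qed

lemma inside_triangle_if_via_meets:
  assumes "{a, b, c, d} \<subseteq> V" "distinct [a, b, c, d]"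
    and "(path_image (via a d b) - {pos a, pos b}) \<inter> inside (triangle {a, b, c}) \<noteq> {}"
  shows "pos d \<in> inside (triangle {a, b, c})"
proof -
  let ?C = "path_image (via a d b) - {pos a, pos b}"
  have via: "arc (via a d b)" "pathstart (via a d b) = pos a" "pathfinish (via a d b) = pos b"
    using arc_via[of a b d] assms by auto
  have "connected ?C"
    using connected_simple_path_endless[OF arc_imp_simple_path[OF via(1)]] via(2,3) by simp
  moreover have "?C \<inter> triangle {a, b, c} = {}"
    using assms arc_via[of a b d] edge_Int_triangle[of a b c d]
      edge_Int_triangle[of b a c d] path_image_edge_commute[of a d]
    by (auto simp: insert_commute)
  moreover have "pos d \<in> ?C"
    using assms arc_via[of a b d] pos_in_edge[of a d] pos_eq_iff by auto
  ultimately show ?thesis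
    using connected_disjoint_inside assms(3) by blast
qed

lemma quadrangle_eq_via:
  assumes "{a, b, c, d} \<subseteq> V" "distinct [a, b, c, d]"
  shows "quadrangle a c b d = path_image (via a c b) \<union> path_image (via a d b)"
  using assms arc_via[of a b c] arc_via[of a b d]
    path_image_edge_commute[of d b] path_image_edge_commute[of a d]
  by (auto simp: quadrangle_def)

lemma K4_theta_cases:
  assumes "{a, b, c, d} \<subseteq> V" "distinct [a, b, c, d]"
  shows "pos d \<in> inside (triangle {a, b, c}) \<or> pos c \<in> inside (triangle {a, b, d}) \<or>
    (E a b - {pos a, pos b}) \<inter> inside (quadrangle a c b d) \<noteq> {}"
  using theta_arc_meets_inside[OF independent_edge_via[of a b c] independent_edge_via[of a b d]
      independent_via_via[of a b c d]]
    inside_triangle_if_via_meets[of a b c d] inside_triangle_if_via_meets[of a b d c]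
    triangle_via[of a b c] triangle_via[of a b d] quadrangle_eq_via[of a b c d] assms
  by (auto simp: insert_commute)

lemma pos_notin_inside_triangle:
  assumes "{a, b, c} \<subseteq> V" "distinct [a, b, c]"
  shows "pos a \<notin> inside (triangle {a, b, c})" "pos b \<notin> inside (triangle {a, b, c})"
    and "pos c \<notin> inside (triangle {a, b, c})"
proof -
  have "pos a \<in> triangle {a, b, c}" "pos b \<in> triangle {a, b, c}" "pos c \<in> triangle {a, b, c}"
    using assms pos_in_edge[of a b] pos_in_edge[of b c] by (auto simp: triangle_eq)
  then show "pos a \<notin> inside (triangle {a, b, c})" "pos b \<notin> inside (triangle {a, b, c})"
    and "pos c \<notin> inside (triangle {a, b, c})"
    using inside_no_overlap[of "triangle {a, b, c}"] by blast+
qed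

lemma edge_inside_triangle_if_meets:
  assumes "{a, b, c, d} \<subseteq> V" "distinct [a, b, c, d]"
    and "(E a d - {pos a}) \<inter> inside (triangle {a, b, c}) \<noteq> {}"
  shows "E a d - {pos a} \<subseteq> inside (triangle {a, b, c})"
proof -
  have "(E a d - {pos a}) \<inter> triangle {a, b, c} = {}"
    using edge_Int_triangle[of a b c d] path_image_edge_commute[of a d] assms by auto
  then show ?thesis
    using connected_disjoint_inside connected_edge_minus_start[of a d] assms by auto
qed

lemma inside_quadrangle_split:
  assumes "{a, b, c, d} \<subseteq> V" "distinct [a, b, c, d]"
    and "(E a b - {pos a, pos b}) \<inter> inside (quadrangle a c b d) \<noteq> {}"
  shows "inside (quadrangle a c b d) =
    inside (triangle {a, b, c}) \<union> inside (triangle {a, b, d}) \<union> (E a b - {pos a, pos b})"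
proof -
  have "independent_arcs (pos a) (pos b) (via a c b) (edge a b)"
    "independent_arcs (pos a) (pos b) (via a d b) (edge a b)"
    using independent_edge_via[of a b c] independent_edge_via[of a b d] assms
    by (auto simp: independent_arcs_commute)
  then show ?thesis
    using inside_theta_split[OF independent_via_via[OF assms(1,2)]] assms(3)
      quadrangle_eq_via[OF assms(1,2)] triangle_via[of a b c] triangle_via[of a b d] assms
    by (auto simp: Un_commute)
qed

lemma inside_triangle_split_via:
  assumes "{a, b, c, v} \<subseteq> V" "distinct [a, b, c, v]"
    and "pos v \<in> inside (triangle {a, b, c})"
  shows "inside (triangle {a, b, c}) =
    inside (triangle {a, b, v}) \<union> inside (quadrangle a c b v) \<union>
    (path_image (via a v b) - {pos a, pos b})"
proof -
  have "pos v \<in> path_image (via a v b)"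
    using arc_via[of a b v] pos_in_edge[of a v] assms by auto
  then show ?thesis
    using inside_theta_split[OF independent_edge_via[of a b c] independent_edge_via[of a b v]
        independent_via_via[of a b c v]] assms
      triangle_via[of a b c] triangle_via[of a b v] quadrangle_eq_via[of a b c v]
    by auto
qed

lemma crossing_chords_vertex_inside:
  assumes "{a, b, c, d} \<subseteq> V" "distinct [a, b, c, d]"
    and "(E a b - {pos a, pos b}) \<inter> inside (quadrangle a c b d) \<noteq> {}"
    and "(E c d - {pos c, pos d}) \<inter> inside (quadrangle a c b d) \<noteq> {}"
  shows "pos d \<in> inside (triangle {a, b, c}) \<or> pos c \<in> inside (triangle {a, b, d})"
proof -
  obtain z where z: "z \<in> E c d - {pos c, pos d}" "z \<in> inside (quadrangle a c b d)"
    using assms(4) by blast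
  have "z \<notin> E a b"
    using path_image_edge_Int[of a b c d] assms z(1) by (auto simp: doubleton_eq_iff)
  then have "z \<in> inside (triangle {c, a, b}) \<or> z \<in> inside (triangle {d, a, b})"
    using z(2) inside_quadrangle_split[OF assms(1-3)] by (auto simp: insert_commute)
  moreover have "pos d \<in> E c d - {pos c}" "pos c \<in> E d c - {pos d}"
    using pos_in_edge[of c d] pos_in_edge[of d c] pos_eq_iff assms by auto
  moreover have "z \<in> E c d - {pos c}" "z \<in> E d c - {pos d}"
    using z(1) path_image_edge_commute[of c d] assms by auto
  ultimately show ?thesis
    using edge_inside_triangle_if_meets[of c a b d] edge_inside_triangle_if_meets[of d a b c] assms
    by (auto simp: insert_commute)
qed

lemma K4_vertex_inside_triangle:
  assumes "{a, b, c, d} \<subseteq> V" "distinct [a, b, c, d]"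
  shows "pos a \<in> inside (triangle {b, c, d}) \<or> pos b \<in> inside (triangle {a, c, d}) \<or>
    pos c \<in> inside (triangle {a, b, d}) \<or> pos d \<in> inside (triangle {a, b, c})"
proof -
  have "quadrangle c a d b = quadrangle a c b d"
    using path_image_edge_commute[of c a] path_image_edge_commute[of a d]
      path_image_edge_commute[of d b] path_image_edge_commute[of b c] assms
    by (auto simp: quadrangle_def)
  moreover have "{c, d, a, b} \<subseteq> V" "distinct [c, d, a, b]"
    using assms by auto
  moreover have "{c, d, a} = {a, c, d}" "{c, d, b} = {b, c, d}"
    by auto
  ultimately show ?thesis
    using K4_theta_cases[OF assms] K4_theta_cases[of c d a b]
      crossing_chords_vertex_inside[OF assms] by metis
qed

text \<open>If \<open>v\<close> lies inside the triangle \<open>a, b, c\<close>, the edge from \<open>c\<close> to \<open>v\<close> enters the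
  triangle at once; it avoids the path from \<open>a\<close> through \<open>v\<close> to \<open>b\<close>, and it cannot enter the
  triangle \<open>a, b, v\<close>, since then \<open>c\<close> would lie inside the triangle \<open>a, b, c\<close>.\<close>

lemma edge_meets_inside_quadrangle:
  assumes "{a, b, c, v} \<subseteq> V" "distinct [a, b, c, v]"
    and "pos v \<in> inside (triangle {a, b, c})"
  shows "(E c v - {pos c, pos v}) \<inter> inside (quadrangle a c b v) \<noteq> {}"
proof -
  note split_abc = inside_triangle_split_via[OF assms]
  have "E c v - {pos c} \<subseteq> inside (triangle {c, a, b})"
    using edge_inside_triangle_if_meets[of c a b v] pos_in_edge[of c v] pos_eq_iff assms
    by (auto simp: insert_commute)
  moreover obtain z where z: "z \<in> E c v - {pos c, pos v}"
    using nonempty_simple_path_endless[OF arc_imp_simple_path[OF arc_edge[of c v]]] assms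
    by (auto simp: pathstart_edge pathfinish_edge)
  ultimately have "z \<in> inside (triangle {a, b, c})"
    by (auto simp: insert_commute)
  moreover have "z \<notin> inside (triangle {a, b, v})"
  proof
    assume "z \<in> inside (triangle {a, b, v})"
    then have "E v c - {pos v} \<subseteq> inside (triangle {v, a, b})"
      using edge_inside_triangle_if_meets[of v a b c] z path_image_edge_commute[of c v] assms
      by (auto simp: insert_commute)
    then have "pos c \<in> inside (triangle {a, b, c})"
      using split_abc pos_in_edge[of v c] pos_eq_iff assms by (auto simp: insert_commute)
    then show False
      using pos_notin_inside_triangle(3)[of a b c] assms by auto
  qed
  moreover have "z \<notin> path_image (via a v b)"
    using z arc_via[of a b v] path_image_edge_Int[of c v a v] path_image_edge_Int[of c v v b] assms
    by (auto simp: doubleton_eq_iff)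
  ultimately show ?thesis
    using z split_abc by blast
qed

lemma inside_triangle_split:
  assumes "{a, b, c, v} \<subseteq> V" "distinct [a, b, c, v]"
    and "pos v \<in> inside (triangle {a, b, c})"
  shows "inside (triangle {a, b, v}) \<union> inside (triangle {c, v, a}) \<union> inside (triangle {c, v, b})
      \<subseteq> inside (triangle {a, b, c})"
    and "inside (triangle {a, b, c}) \<subseteq>
      inside (triangle {a, b, v}) \<union> inside (triangle {c, v, a}) \<union> inside (triangle {c, v, b}) \<union>
      path_image (via a v b) \<union> E c v"
proof -
  have "quadrangle c a v b = quadrangle a c b v"
    using path_image_edge_commute[of c a] path_image_edge_commute[of b c]
      path_image_edge_commute[of v b] path_image_edge_commute[of a v] assms
    by (auto simp: quadrangle_def)
  then have "inside (quadrangle a c b v) =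
      inside (triangle {c, v, a}) \<union> inside (triangle {c, v, b}) \<union> (E c v - {pos c, pos v})"
    using inside_quadrangle_split[of c v a b] edge_meets_inside_quadrangle[OF assms] assms by auto
  then show "inside (triangle {a, b, v}) \<union> inside (triangle {c, v, a}) \<union> inside (triangle {c, v, b})
      \<subseteq> inside (triangle {a, b, c})"
    and "inside (triangle {a, b, c}) \<subseteq>
      inside (triangle {a, b, v}) \<union> inside (triangle {c, v, a}) \<union> inside (triangle {c, v, b}) \<union>
      path_image (via a v b) \<union> E c v"
    using inside_triangle_split_via[OF assms] by auto
qed

text \<open>Otherwise \<open>w\<close> lies inside one of the three smaller triangles around \<open>v\<close>, and with it
  the vertex of the triangle \<open>a, b, c\<close> opposite to that smaller triangle.\<close>

lemma vertex_not_inside_triangle: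
  assumes "{a, b, c, v, w} \<subseteq> V" "distinct [a, b, c, v, w]"
  shows "pos v \<notin> inside (triangle {a, b, c})"
proof
  assume v: "pos v \<in> inside (triangle {a, b, c})"
  have abcv: "{a, b, c, v} \<subseteq> V" "distinct [a, b, c, v]"
    using assms by auto
  note split = inside_triangle_split[OF abcv v]
  have "pos w \<in> inside (triangle {a, b, c})"
    using inside_triangle_other_vertex[of a b c v w] v assms by auto
  moreover have "pos w \<notin> E a v" "pos w \<notin> E v b" "pos w \<notin> E c v"
    using pos_notin_edge assms by auto
  moreover have "path_image (via a v b) = E a v \<union> E v b"
    using arc_via(4)[of a b v] assms by auto
  ultimately consider "pos w \<in> inside (triangle {a, b, v})" | "pos w \<in> inside (triangle {c, v, a})"
    | "pos w \<in> inside (triangle {c, v, b})"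
    using split(2) by blast
  then show False
  proof cases
    case 1
    then have "pos c \<in> inside (triangle {a, b, c})"
      using inside_triangle_other_vertex[of a b v w c] split(1) assms by auto
    then show False
      using pos_notin_inside_triangle(3)[of a b c] assms by auto
  next
    case 2
    then have "pos b \<in> inside (triangle {a, b, c})"
      using inside_triangle_other_vertex[of c v a w b] split(1) assms by auto
    then show False
      using pos_notin_inside_triangle(2)[of a b c] assms by auto
  next
    case 3
    then have "pos a \<in> inside (triangle {a, b, c})"
      using inside_triangle_other_vertex[of c v b w a] split(1) assms by auto
    then show False
      using pos_notin_inside_triangle(1)[of a b c] assms by auto
  qed
qed

lemma no_K5:
  assumes "{a, b, c, d, e} \<subseteq> V"
  shows "\<not> distinct [a, b, c, d, e]"
proof
  assume distinct: "distinct [a, b, c, d, e]"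
  then have "{a, b, c, d} \<subseteq> V" "distinct [a, b, c, d]"
    using assms by auto
  then show False
    using K4_vertex_inside_triangle vertex_not_inside_triangle[of b c d a e]
      vertex_not_inside_triangle[of a c d b e] vertex_not_inside_triangle[of a b d c e]
      vertex_not_inside_triangle[of a b c d e] assms distinct by auto
qed

end

lemma planar_graph_complete_drawing:
  fixes x :: "nat \<Rightarrow> 'v"
  assumes "planar_graph V Adj" "inj_on x N" "x ` N \<subseteq> V"
    and adj: "\<And>i j. i \<in> N \<Longrightarrow> j \<in> N \<Longrightarrow> i \<noteq> j \<Longrightarrow> Adj (x i) (x j)"
  shows "\<exists>pos edge. complete_drawing N pos edge"
proof -
  obtain pos :: "'v \<Rightarrow> complex" and c where inj: "inj_on pos V"
    and arcs: "\<forall>u\<in>V. \<forall>v\<in>V. Adj u v \<longrightarrow>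
      arc (c u v) \<and> pathstart (c u v) = pos u \<and> pathfinish (c u v) = pos v \<and>
      path_image (c u v) \<inter> pos ` V = {pos u, pos v}"
    and cross: "\<forall>u\<in>V. \<forall>v\<in>V. \<forall>u'\<in>V. \<forall>v'\<in>V. Adj u v \<longrightarrow> Adj u' v' \<longrightarrow> {u, v} \<noteq> {u', v'} \<longrightarrow>
      path_image (c u v) \<inter> path_image (c u' v') \<subseteq> pos ` ({u, v} \<inter> {u', v'})"
    using assms(1) unfolding planar_graph_def by (elim exE conjE) (rule that; assumption)
  \<comment> \<open>The two orientations of an edge may be drawn by different arcs, so each edge of the
    clique is drawn by the arc leaving its endpoint of smaller index.\<close>
  define edge where "edge i j = (if i < j then c (x i) (x j) else reversepath (c (x j) (x i)))"
    for i j
  have image_edge: "path_image (edge i j) = path_image (c (x (min i j)) (x (max i j)))" for i j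
    by (simp add: edge_def min_def max_def path_image_reversepath)
  show ?thesis
  proof (intro exI complete_drawing.intro)
    show "inj_on (pos \<circ> x) N"
      using comp_inj_on[OF assms(2) inj_on_subset[OF inj assms(3)]] .
    fix i j assume ij: "i \<in> N" "j \<in> N" "i \<noteq> j"
    have "x i \<in> V" "x j \<in> V"
      using ij assms(3) by auto
    then have "arc (c (x i) (x j)) \<and> pathstart (c (x i) (x j)) = pos (x i) \<and>
        pathfinish (c (x i) (x j)) = pos (x j)"
      "arc (c (x j) (x i)) \<and> pathstart (c (x j) (x i)) = pos (x j) \<and>
        pathfinish (c (x j) (x i)) = pos (x i)"
      using arcs adj ij by auto
    then show "arc (edge i j)" "pathstart (edge i j) = (pos \<circ> x) i"
      "pathfinish (edge i j) = (pos \<circ> x) j"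
      by (auto simp: edge_def arc_reversepath)
    show "path_image (edge j i) = path_image (edge i j)"
      by (simp add: image_edge min.commute max.commute)
    fix k l assume kl: "k \<in> N" "l \<in> N" "k \<noteq> l" and ne: "{i, j} \<noteq> {k, l}"
    have "x (min i j) \<in> V" "x (max i j) \<in> V" "x (min k l) \<in> V" "x (max k l) \<in> V"
      using ij kl assms(3) by (auto simp: min_def max_def)
    moreover have "Adj (x (min i j)) (x (max i j))" "Adj (x (min k l)) (x (max k l))"
      using ij kl adj by (auto simp: min_def max_def)
    moreover have "{x (min i j), x (max i j)} \<noteq> {x (min k l), x (max k l)}"
      using ne ij kl inj_on_eq_iff[OF assms(2)] by (auto simp: min_def max_def doubleton_eq_iff)
    ultimately have "path_image (edge i j) \<inter> path_image (edge k l) \<subseteq>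
        pos ` ({x (min i j), x (max i j)} \<inter> {x (min k l), x (max k l)})"
      unfolding image_edge by (rule cross[rule_format])
    also have "\<dots> \<subseteq> (pos \<circ> x) ` ({i, j} \<inter> {k, l})"
      using ij kl inj_on_eq_iff[OF assms(2)] by (auto simp: min_def max_def)
    finally show "path_image (edge i j) \<inter> path_image (edge k l) \<subseteq> (pos \<circ> x) ` ({i, j} \<inter> {k, l})" .
  qed
qed

lemma planar_graph_clique_card_le_4:
  assumes "planar_graph V Adj" "K \<subseteq> V" "\<And>u v. u \<in> K \<Longrightarrow> v \<in> K \<Longrightarrow> u \<noteq> v \<Longrightarrow> Adj u v"
  shows "card K \<le> 4"
proof (rule ccontr)
  assume "\<not> card K \<le> 4"
  then obtain K5 where K5: "K5 \<subseteq> K" "card K5 = 5" "finite K5"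
    using obtain_subset_with_card_n[of 5 K] by force
  then obtain x where "bij_betw x {0..<5::nat} K5"
    using ex_bij_betw_nat_finite by metis
  then have x: "inj_on x {0..<5::nat}" "x ` {0..<5::nat} = K5"
    by (auto simp: bij_betw_def)
  have "x ` {0..<5::nat} \<subseteq> V"
    using x(2) K5(1) assms(2) by blast
  moreover have "Adj (x i) (x j)" if "i \<in> {0..<5::nat}" "j \<in> {0..<5::nat}" "i \<noteq> j" for i j
    using that x K5(1) assms(3) inj_on_eq_iff[OF x(1)] by blast
  ultimately obtain pos edge where "complete_drawing {0..<5::nat} pos edge"
    using planar_graph_complete_drawing[OF assms(1) x(1)] by blast
  then show False
    using complete_drawing.no_K5[of "{0..<5::nat}" pos edge 0 1 2 3 4] by simp
qed

section \<open>Minimal generating sets of \<open>m/I\<close>\<close>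

lemma (in ring) finite_proper_ideal_subset_maximal:
  assumes "finite (carrier R)" "ideal I R" "I \<noteq> carrier R"
  shows "\<exists>M. maximalideal M R \<and> I \<subseteq> M"
proof -
  define C where "C = {J. ideal J R \<and> I \<subseteq> J \<and> J \<noteq> carrier R}"
  have "C \<subseteq> Pow (carrier R)"
    unfolding C_def by (auto dest: ideal.Icarr)
  then have "finite C"
    using finite_subset assms(1) finite_Pow_iff by metis
  moreover have "I \<in> C"
    unfolding C_def using assms(2,3) by auto
  ultimately obtain M where M: "M \<in> C" and max: "\<forall>J\<in>C. M \<subseteq> J \<longrightarrow> M = J"
    using finite_has_maximal[of C] by blast
  have "maximalideal M R"
  proof (rule maximalidealI)
    show "ideal M R" "carrier R \<noteq> M"
      using M unfolding C_def by auto
    fix J assume J: "ideal J R" "M \<subseteq> J" "J \<subseteq> carrier R"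
    show "J = M \<or> J = carrier R"
    proof (cases "J = carrier R")
      case False
      then have "J \<in> C"
        using J M unfolding C_def by auto
      then show ?thesis
        using max J(2) by blast
    qed simp
  qed
  then show ?thesis
    using M unfolding C_def by auto
qed

lemma (in ring) minimal_gen_set_exists:
  assumes "finite (carrier R)" "ideal K R"
  shows "\<exists>S. minimal_gen_set R K S"
proof -
  define generates where "generates S \<longleftrightarrow> S \<subseteq> carrier R \<and> Idl S = K" for S
  have "K \<subseteq> carrier R"
    using assms(2) by (auto dest: ideal.Icarr)
  then have "generates K"
    unfolding generates_def using genideal_self genideal_minimal[OF assms(2)] by blast
  then obtain S where S: "generates S" and least: "\<And>T. generates T \<Longrightarrow> card S \<le> card T"
    using ex_has_least_nat[of generates K card] by blast
  have proper: "\<not> generates T" if "T \<subset> S" for T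
  proof
    assume "generates T"
    then have "card S \<le> card T"
      by (rule least)
    moreover have "finite S"
      using S assms(1) finite_subset unfolding generates_def by blast
    then have "card T < card S"
      using that psubset_card_mono by blast
    ultimately show False
      by simp
  qed
  then have "minimal_gen_set R K S"
    using S proper unfolding minimal_gen_set_def generates_def by auto
  then show ?thesis ..
qed

lemma ara_le_card:
  assumes "finite (carrier A)" "minimal_gen_set A K S"
  shows "ara A K \<le> card S"
proof -
  have "card T \<le> card (carrier A)" if "minimal_gen_set A K T" for T
    using that assms(1) card_mono unfolding minimal_gen_set_def by blast
  then have "{card T | T. minimal_gen_set A K T} \<subseteq> {..card (carrier A)}"
    by auto
  then have "finite {card T | T. minimal_gen_set A K T}"
    using finite_subset by blast
  then show ?thesis
    unfolding ara_def using assms(2) by (auto intro: Min_le)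
qed

lemma (in ring) minimal_gen_set_notin_genideal_remove:
  assumes "minimal_gen_set R K S" "s \<in> S"
  shows "s \<notin> Idl (S - {s})"
proof
  assume s: "s \<in> Idl (S - {s})"
  have S: "S \<subseteq> carrier R" "Idl S = K"
    using assms(1) by (auto simp: minimal_gen_set_def)
  then have "S \<subseteq> Idl (S - {s})"
    using s genideal_self[of "S - {s}"] by blast
  then have "Idl S \<subseteq> Idl (S - {s})"
    using S(1) by (intro genideal_minimal genideal_ideal) auto
  moreover have "Idl (S - {s}) \<subseteq> Idl S"
    using S(1) by (intro subset_Idl_subset) auto
  ultimately have "Idl (S - {s}) = K"
    using S(2) by blast
  moreover have "S - {s} \<subset> S"
    using assms(2) by blast
  ultimately show False
    using assms(1) by (auto simp: minimal_gen_set_def)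
qed

lemma (in ring) minimal_gen_set_zero_notin:
  assumes "minimal_gen_set R K S"
  shows "\<zero> \<notin> S"
proof
  assume "\<zero> \<in> S"
  moreover have "ideal (Idl (S - {\<zero>})) R"
    using assms by (intro genideal_ideal) (auto simp: minimal_gen_set_def)
  ultimately show False
    using minimal_gen_set_notin_genideal_remove[OF assms]
      additive_subgroup.zero_closed ideal.axioms(1)
    by blast
qed

lemma (in cring) minimal_gen_set_notin_cgenideal:
  assumes "minimal_gen_set R K S" "s \<in> S" "t \<in> S" "s \<noteq> t"
  shows "s \<notin> PIdl t"
proof -
  have "t \<in> carrier R" "S \<subseteq> carrier R"
    using assms by (auto simp: minimal_gen_set_def)
  then have "PIdl t \<subseteq> Idl (S - {s})"
    using assms(3,4) cgenideal_eq_genideal[of t] subset_Idl_subset[of "S - {s}" "{t}"] by auto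
  then show ?thesis
    using minimal_gen_set_notin_genideal_remove[OF assms(1,2)] by blast
qed

lemma (in ideal) rcos_mem_cgenideal_quotient:
  assumes "x \<in> carrier R" "y \<in> carrier R" "x \<in> PIdl y <+>\<^bsub>R\<^esub> I"
  shows "I +> x \<in> PIdl\<^bsub>R Quot I\<^esub> (I +> y)"
proof -
  obtain r k where rk: "r \<in> carrier R" "k \<in> I" "x = r \<otimes> y \<oplus> k"
    using assms(3) unfolding set_add_def' cgenideal_def by blast
  then have "x \<in> I +> (r \<otimes> y)"
    using assms(2) Icarr unfolding a_r_coset_def' by (auto simp: a_comm)
  then have "I +> x = I +> (r \<otimes> y)"
    using a_repr_independence' rk(1) assms(2) by (metis m_closed)
  also have "\<dots> = (I +> r) \<otimes>\<^bsub>R Quot I\<^esub> (I +> y)"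
    using rcoset_mult_add[OF rk(1) assms(2)] by (simp add: FactRing_def)
  finally show ?thesis
    using rk(1) a_rcosetsI[OF a_subset rk(1)] unfolding cgenideal_def by (auto simp: FactRing_def)
qed

lemma maximal_ideal_minus_subset_gamma2_vertices:
  assumes "ring R" "maximalideal m R" "ideal I R" "I \<subseteq> m"
  shows "m - I \<subseteq> gamma2_vertices R I"
proof
  interpret R: ring R by (rule assms(1))
  interpret M: maximalideal m R by (rule assms(2))
  fix x assume x: "x \<in> m - I"
  have "PIdl\<^bsub>R\<^esub> x \<subseteq> m"
    using x by (intro R.cgenideal_minimal M.is_ideal) auto
  then have "PIdl\<^bsub>R\<^esub> x <+>\<^bsub>R\<^esub> I \<subseteq> m"
    using assms(4) M.a_closed unfolding set_add_def' by blast
  then show "x \<in> gamma2_vertices R I"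
    using x M.I_notcarr M.Icarr unfolding gamma2_vertices_def by blast
qed

lemma minimal_gen_set_lifts_to_clique:
  assumes "cring R" "maximalideal m R" "ideal I R" "I \<subseteq> m"
    and S: "minimal_gen_set (R Quot I) (quot_ideal R m I) S"
  shows "\<exists>K \<subseteq> gamma2_vertices R I. card K = card S \<and>
    (\<forall>x\<in>K. \<forall>y\<in>K. x \<noteq> y \<longrightarrow> gamma2_adj R I x y)"
proof -
  interpret R: cring R by (rule assms(1))
  interpret I: ideal I R by (rule assms(3))
  interpret M: maximalideal m R by (rule assms(2))
  interpret A: cring "R Quot I" by (rule I.quotient_is_cring[OF R.is_cring])
  have "S \<subseteq> quot_ideal R m I"
    using S A.genideal_self unfolding minimal_gen_set_def by blast
  then have "\<forall>s\<in>S. \<exists>x\<in>m. I +>\<^bsub>R\<^esub> x = s"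
    unfolding quot_ideal_def by blast
  then obtain lift where lift: "\<And>s. s \<in> S \<Longrightarrow> lift s \<in> m" "\<And>s. s \<in> S \<Longrightarrow> I +>\<^bsub>R\<^esub> lift s = s"
    by metis
  have "lift s \<notin> I" if "s \<in> S" for s
  proof
    assume "lift s \<in> I"
    then have "s = \<zero>\<^bsub>R Quot I\<^esub>"
      using lift(2)[OF that] I.a_rcos_const by (simp add: FactRing_def)
    then show False
      using A.minimal_gen_set_zero_notin[OF S] that by simp
  qed
  then have vertices: "lift ` S \<subseteq> gamma2_vertices R I"
    using maximal_ideal_minus_subset_gamma2_vertices[OF R.ring_axioms assms(2-4)] lift(1) by blast
  have "inj_on lift S"
    using lift(2) by (metis inj_onI)
  then have card: "card (lift ` S) = card S"
    by (rule card_image)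
  have notin: "lift s \<notin> PIdl\<^bsub>R\<^esub> (lift t) <+>\<^bsub>R\<^esub> I" if st: "s \<in> S" "t \<in> S" "s \<noteq> t" for s t
  proof
    assume "lift s \<in> PIdl\<^bsub>R\<^esub> (lift t) <+>\<^bsub>R\<^esub> I"
    then have "I +>\<^bsub>R\<^esub> lift s \<in> PIdl\<^bsub>R Quot I\<^esub> (I +>\<^bsub>R\<^esub> lift t)"
      using I.rcos_mem_cgenideal_quotient lift(1) st(1,2) M.Icarr by blast
    then have "s \<in> PIdl\<^bsub>R Quot I\<^esub> t"
      using lift(2) st(1,2) by simp
    then show False
      using A.minimal_gen_set_notin_cgenideal[OF S st] by blast
  qed
  have "gamma2_adj R I x y" if xy: "x \<in> lift ` S" "y \<in> lift ` S" "x \<noteq> y" for x y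
  proof -
    obtain s t where "s \<in> S" "t \<in> S" "x = lift s" "y = lift t"
      using xy(1,2) by blast
    then show ?thesis
      using xy vertices notin[of s t] notin[of t s] unfolding gamma2_adj_def by blast
  qed
  then show ?thesis
    using vertices card by blast
qed

lemma local_ring_proper_ideal_subset:
  assumes "finite (carrier R)" "local_ring_with_max R m" "ideal I R" "I \<noteq> carrier R"
  shows "I \<subseteq> m"
proof -
  have R: "cring R" and unique: "\<And>J. maximalideal J R \<Longrightarrow> J = m"
    using assms(2) unfolding local_ring_with_max_def by auto
  interpret R: cring R by (rule R)
  obtain M where "maximalideal M R" "I \<subseteq> M"
    using R.finite_proper_ideal_subset_maximal[OF assms(1,3,4)] by blast
  then show ?thesis
    using unique by blast
qed

lemma (in ideal) finite_carrier_quotient: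
  assumes "finite (carrier R)"
  shows "finite (carrier (R Quot I))"
proof -
  have "carrier (R Quot I) = (\<lambda>a. I +> a) ` carrier R"
    by (auto simp: FactRing_def A_RCOSETS_def')
  then show ?thesis
    using assms by simp
qed

theorem proposition3p11:
  fixes R :: "('a, 'b) ring_scheme" and m I :: "'a set"
  assumes "finite (carrier R)"
    and "local_ring_with_max R m"
    and "\<not> principalideal m R"
    and "ideal I R" and "I \<noteq> carrier R"
    and "planar_graph (gamma2_vertices R I) (gamma2_adj R I)"
  shows "ara (R Quot I) (quot_ideal R m I) \<le> 4"
proof -
  have R: "cring R" and m: "maximalideal m R"
    using assms(2) unfolding local_ring_with_max_def by auto
  interpret I: ideal I R by (rule assms(4))
  have finite: "finite (carrier (R Quot I))"
    using I.finite_carrier_quotient[OF assms(1)] .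
  have "ideal (quot_ideal R m I) (R Quot I)"
    unfolding quot_ideal_def
    by (rule I.ring_ideal_imp_quot_ideal[OF assms(4) maximalideal.axioms(1)[OF m]])
  then obtain S where S: "minimal_gen_set (R Quot I) (quot_ideal R m I) S"
    using ring.minimal_gen_set_exists[OF I.quotient_is_ring finite] by blast
  obtain K where K: "K \<subseteq> gamma2_vertices R I" "card K = card S"
    "\<forall>x\<in>K. \<forall>y\<in>K. x \<noteq> y \<longrightarrow> gamma2_adj R I x y"
    using minimal_gen_set_lifts_to_clique[OF R m assms(4)
        local_ring_proper_ideal_subset[OF assms(1,2,4,5)] S]
    by blast
  have "card K \<le> 4"
    using planar_graph_clique_card_le_4[OF assms(6) K(1)] K(3) by blast
  then show ?thesis
    using ara_le_card[OF finite S] K(2) by simp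
qed

end
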